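(* Let $\rho_{mkt}(t)$ be a density matrix on $\mathbb{C}^N$ with initial state diagonal in the basis $\{|f_i\rangle\}$, $\rho_{mkt}(0)=\sum_{i=1}^Np_i(0)|f_i\rangle\langle f_i|$, evolving according to \[ \frac{d\rho_{mkt}(t)}{dt}=\sigma^2\Big(A_u\rho_{mkt}(t)A_d+A_d\rho_{mkt}(t)A_u-\tfrac{1}{2}\{A_uA_d+A_dA_u,\rho_{mkt}(t)\}\Big), \] with $\sigma^2>0$. Then the von Neumann entropy $S(\rho_{mkt}(t))=-\mathrm{Tr}[\rho_{mkt}(t)\log\rho_{mkt}(t)]$ increases monotonically in $t$, and \[ \lim_{t\to\infty}\big(-\mathrm{Tr}[\rho_{mkt}(t)\log(\rho_{mkt}(t))]\big)=\log(N). \]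
   Context: $|f_1\rangle,\dots,|f_N\rangle$ is the orthonormal basis of $\mathbb{C}^N$ (eigenvectors of the price operator), $A_u=\sum_{i=1}^{N-1}|f_{i+1}\rangle\langle f_i|$, $A_d=\sum_{i=1}^{N-1}|f_i\rangle\langle f_{i+1}|$, and $\{\cdot,\cdot\}$ is the anticommutator. This is the "classical" market dynamics arising when the environment stays in its maximum-entropy state and the inhomogeneous term vanishes; in that case $\sigma^2=\kappa(K-1)/K$ with coupling constant $\kappa>0$ and $K\ge 2$ environment levels. *)

theory Defs
  imports "HOL-Analysis.Analysis" "Jordan_Normal_Form.Schur_Decomposition"
begin

text \<open>Basis vectors f_1,...,f_N are the standard basis vectors e_0,...,e_(N-1) of C^N.
  A_u = sum_(i=1)^(N-1) |f_(i+1)><f_i| has entry 1 at (row i+1, column i);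
  A_d = sum_(i=1)^(N-1) |f_i><f_(i+1)| has entry 1 at (row i, column i+1).\<close>

definition A_u :: "nat \<Rightarrow> complex mat" where
  "A_u N = Matrix.mat N N (\<lambda>(r, c). if r = c + 1 then 1 else 0)"

definition A_d :: "nat \<Rightarrow> complex mat" where
  "A_d N = Matrix.mat N N (\<lambda>(r, c). if c = r + 1 then 1 else 0)"

definition mkt_generator :: "real \<Rightarrow> nat \<Rightarrow> complex mat \<Rightarrow> complex mat" where
  "mkt_generator sigma2 N \<rho> =
     complex_of_real sigma2 \<cdot>\<^sub>m
       (A_u N * \<rho> * A_d N + A_d N * \<rho> * A_u N
        - (complex_of_real (1/2)) \<cdot>\<^sub>m
            ((A_u N * A_d N + A_d N * A_u N) * \<rho> + \<rho> * (A_u N * A_d N + A_d N * A_u N)))"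

definition unitary_mat :: "nat \<Rightarrow> complex mat \<Rightarrow> bool" where
  "unitary_mat N U \<longleftrightarrow> U \<in> carrier_mat N N \<and> mat_adjoint U * U = 1\<^sub>m N \<and> U * mat_adjoint U = 1\<^sub>m N"

definition herm_mat_fun :: "(real \<Rightarrow> real) \<Rightarrow> complex mat \<Rightarrow> complex mat" where
  "herm_mat_fun f A = (SOME B. \<exists>U (lam :: nat \<Rightarrow> real).
      unitary_mat (dim_row A) U \<and>
      A = U * mat_diag (dim_row A) (\<lambda>i. complex_of_real (lam i)) * mat_adjoint U \<and>
      B = U * mat_diag (dim_row A) (\<lambda>i. complex_of_real (f (lam i))) * mat_adjoint U)"

definition mat_trace :: "complex mat \<Rightarrow> complex" where
  "mat_trace A = (\<Sum>i<dim_row A. A $$ (i, i))"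

text \<open>von Neumann entropy S(rho) = - Tr[rho log rho], with the usual convention 0 log 0 = 0,
  i.e. rho log rho is the matrix function x \<mapsto> x ln x applied to rho.\<close>
definition von_neumann_entropy :: "complex mat \<Rightarrow> real" where
  "von_neumann_entropy \<rho> = - Re (mat_trace (herm_mat_fun (\<lambda>x. x * ln x) \<rho>))"

end

theory Submission
  imports Defs "HOL-Real_Asymp.Real_Asymp"
begin

(* Entrywise, the generator acts on every diagonal {(i, i + d)} of the matrix as the Laplacian of
   the path 0 - 1 - ... - (N - 1), minus a nonnegative potential off the main diagonal. Hence the
   squared Hilbert-Schmidt norm of the off-diagonal part cannot grow, the initially diagonal state
   stays diagonal, and its diagonal p(t) solves the discrete heat equation p' = sigma2 Lap p with
   reflecting boundary. Summation by parts shows that sum_i g(p_i) is nonincreasing along this flow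
   whenever g' is monotone: this gives conservation of mass, positivity and, after regularising
   x ln x at 0, monotonicity of the entropy. A discrete Poincare inequality makes
   sum_i (p_i - 1/N)^2 decay exponentially, so p(t) tends to the uniform distribution and the
   entropy to ln N. *)

lemma DERIV_within_nonpos_imp_nonincreasing:
  fixes f f' :: "real \<Rightarrow> real"
  assumes deriv: "\<And>x. a \<le> x \<Longrightarrow> (f has_real_derivative f' x) (at x within {a..})"
    and nonpos: "\<And>x. a \<le> x \<Longrightarrow> f' x \<le> 0"
    and "a \<le> s" "s \<le> t"
  shows "f t \<le> f s"
proof (rule DERIV_nonpos_imp_decreasing_open[OF \<open>s \<le> t\<close>])
  fix x assume "s < x" "x < t"
  then have "x \<in> {a<..}" using \<open>a \<le> s\<close> by simp
  have "(f has_real_derivative f' x) (at x within {a<..})"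
    by (rule DERIV_subset[OF deriv]) (use \<open>x \<in> {a<..}\<close> in auto)
  then have "(f has_real_derivative f' x) (at x)"
    using at_within_open[OF \<open>x \<in> {a<..}\<close> open_greaterThan] by simp
  then show "\<exists>y. (f has_real_derivative y) (at x) \<and> y \<le> 0"
    using nonpos[of x] \<open>x \<in> {a<..}\<close> by auto
next
  have "continuous_on {a..} f"
    using deriv DERIV_continuous continuous_on_eq_continuous_within by fastforce
  then show "continuous_on {s..t} f"
    by (rule continuous_on_subset) (use \<open>a \<le> s\<close> in auto)
qed

lemma has_real_derivative_min_0_power2:
  fixes x :: real
  shows "((\<lambda>y. (min y 0)\<^sup>2) has_real_derivative 2 * min x 0) (at x)"
proof (cases x "0::real" rule: linorder_cases)
  case less
  have "\<forall>\<^sub>F y in nhds x. (min y 0)\<^sup>2 = y\<^sup>2"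
    using eventually_nhds_in_open[of "{..<0}" x] less by (auto elim!: eventually_mono)
  then show ?thesis
    using DERIV_cong_ev[OF refl _ refl] DERIV_pow[of 2 x] less by fastforce
next
  case greater
  have "\<forall>\<^sub>F y in nhds x. (min y 0)\<^sup>2 = 0"
    using eventually_nhds_in_open[of "{0<..}" x] greater by (auto elim!: eventually_mono)
  then show ?thesis
    using DERIV_cong_ev[OF refl _ refl] DERIV_const[of 0 "at x"] greater by fastforce
next
  case equal
  have "norm ((min h 0)\<^sup>2 / h) \<le> norm h * 1" for h :: real
    by (cases "h < 0") (auto simp: power2_eq_square abs_mult)
  then have "((\<lambda>h. (min h 0)\<^sup>2 / h) \<longlongrightarrow> 0) (at (0::real))"
    by (intro tendsto_0_le[OF tendsto_ident_at always_eventually, where K = 1]) blast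
  then show ?thesis
    using equal by (simp add: DERIV_def)
qed

lemma tendsto_shift_mult_ln:
  fixes x :: real
  assumes "x \<ge> 0"
  shows "((\<lambda>e. (x + e) * ln (x + e)) \<longlongrightarrow> x * ln x) (at_right 0)"
proof (cases "x = 0")
  case True
  have "((\<lambda>e::real. e * ln e) \<longlongrightarrow> 0) (at_right 0)"
    by real_asymp
  then show ?thesis using True by simp
next
  case False
  with assms show ?thesis
    by (auto intro!: tendsto_eq_intros)
qed

section \<open>The heat equation on a path\<close>

definition path_laplacian :: "nat \<Rightarrow> (nat \<Rightarrow> real) \<Rightarrow> nat \<Rightarrow> real" where
  "path_laplacian N p i =
     (if 1 \<le> i then p (i - 1) - p i else 0) + (if i + 1 < N then p (i + 1) - p i else 0)"

lemma sum_mult_path_laplacian: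
  "(\<Sum>i<N. g i * path_laplacian N p i) = - (\<Sum>k<N - 1. (g (k + 1) - g k) * (p (k + 1) - p k))"
proof (cases N)
  case (Suc n)
  have "(\<Sum>i<N. g i * path_laplacian N p i)
      = (\<Sum>i<Suc n. g i * (if 1 \<le> i then p (i - 1) - p i else 0))
        + (\<Sum>i<Suc n. g i * (if i < n then p (i + 1) - p i else 0))"
    unfolding path_laplacian_def Suc distrib_left sum.distrib by simp
  also have "(\<Sum>i<Suc n. g i * (if 1 \<le> i then p (i - 1) - p i else 0))
      = (\<Sum>i<n. g (i + 1) * (p i - p (i + 1)))"
    unfolding sum.lessThan_Suc_shift by simp
  also have "(\<Sum>i<Suc n. g i * (if i < n then p (i + 1) - p i else 0))
      = (\<Sum>i<n. g i * (p (i + 1) - p i))"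
    by simp
  also have "(\<Sum>i<n. g (i + 1) * (p i - p (i + 1))) + (\<Sum>i<n. g i * (p (i + 1) - p i))
      = - (\<Sum>k<n. (g (k + 1) - g k) * (p (k + 1) - p k))"
    unfolding sum.distrib[symmetric] sum_negf[symmetric] by (rule sum.cong) (auto simp: algebra_simps)
  finally show ?thesis unfolding Suc by simp
qed simp

lemma sum_mono_comp_mult_path_laplacian_nonpos:
  assumes "mono_on S g" "\<And>i. i < N \<Longrightarrow> p i \<in> S"
  shows "(\<Sum>i<N. g (p i) * path_laplacian N p i) \<le> 0"
proof -
  have "(g (p (k + 1)) - g (p k)) * (p (k + 1) - p k) \<ge> 0" if "k < N - 1" for k
    using that assms mono_onD[OF assms(1), of "p k" "p (k + 1)"] mono_onD[OF assms(1), of "p (k + 1)" "p k"]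
    by (cases "p k \<le> p (k + 1)") (auto intro: mult_nonneg_nonneg mult_nonpos_nonpos)
  then have "(\<Sum>k<N - 1. (g (p (k + 1)) - g (p k)) * (p (k + 1) - p k)) \<ge> 0"
    by (intro sum_nonneg) simp
  then show ?thesis
    unfolding sum_mult_path_laplacian[of "\<lambda>i. g (p i)"] by simp
qed

lemma abs_diff_le_sum_abs_increments:
  fixes q :: "nat \<Rightarrow> real"
  assumes "i < N" "j < N"
  shows "\<bar>q i - q j\<bar> \<le> (\<Sum>k<N - 1. \<bar>q (k + 1) - q k\<bar>)"
proof -
  have "\<bar>q j - q i\<bar> \<le> (\<Sum>k<N - 1. \<bar>q (k + 1) - q k\<bar>)" if "i \<le> j" "j < N" for i j
  proof -
    have "\<bar>q j - q i\<bar> = \<bar>\<Sum>k=i..<j. q (Suc k) - q k\<bar>"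
      using sum_Suc_diff'[OF \<open>i \<le> j\<close>, of q] by simp
    also have "\<dots> \<le> (\<Sum>k=i..<j. \<bar>q (Suc k) - q k\<bar>)"
      by (rule sum_abs)
    also have "\<dots> \<le> (\<Sum>k<N - 1. \<bar>q (Suc k) - q k\<bar>)"
      by (rule sum_mono2) (use that in auto)
    finally show ?thesis by simp
  qed
  from this[of i j] this[of j i] assms show ?thesis
    by (cases "i \<le> j") (auto simp: abs_minus_commute)
qed

lemma path_poincare:
  fixes q :: "nat \<Rightarrow> real" and N :: nat
  defines "m \<equiv> (\<Sum>j<N. q j) / N"
  shows "(\<Sum>i<N. (q i - m)\<^sup>2) \<le> real N ^ 3 * (\<Sum>k<N - 1. (q (k + 1) - q k)\<^sup>2)"
proof (cases "N = 0")
  case False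
  define D where "D = (\<Sum>k<N - 1. (q (k + 1) - q k)\<^sup>2)"
  define S where "S = (\<Sum>k<N - 1. \<bar>q (k + 1) - q k\<bar>)"
  have "\<bar>q (k + 1) - q k\<bar> \<le> sqrt D" if "k < N - 1" for k
    using member_le_sum[of k "{..<N - 1}" "\<lambda>k. (q (k + 1) - q k)\<^sup>2"] that
    unfolding D_def by (auto intro: real_le_rsqrt)
  then have "S \<le> real (N - 1) * sqrt D"
    unfolding S_def using sum_bounded_above[of "{..<N - 1}" _ "sqrt D"] by simp
  also have "\<dots> \<le> real N * sqrt D"
    by (intro mult_right_mono) (auto simp: D_def sum_nonneg)
  finally have S_le: "S \<le> real N * sqrt D" .
  have dev: "\<bar>q i - m\<bar> \<le> S" if "i < N" for i
  proof -
    have "real N * \<bar>q i - m\<bar> = \<bar>\<Sum>j<N. q i - q j\<bar>"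
      using False by (simp add: m_def sum_subtractf field_simps flip: abs_mult)
    also have "\<dots> \<le> (\<Sum>j<N. \<bar>q i - q j\<bar>)"
      by (rule sum_abs)
    also have "\<dots> \<le> real N * S"
      using sum_mono[of "{..<N}" "\<lambda>j. \<bar>q i - q j\<bar>" "\<lambda>_. S"]
        abs_diff_le_sum_abs_increments[OF that] by (simp add: S_def)
    finally show ?thesis
      using False by simp
  qed
  have "(q i - m)\<^sup>2 \<le> real N ^ 2 * D" if "i < N" for i
  proof -
    have "\<bar>q i - m\<bar> \<le> real N * sqrt D"
      using dev[OF that] S_le by linarith
    then have "(q i - m)\<^sup>2 \<le> (real N * sqrt D)\<^sup>2"
      by (simp add: power2_le_iff_abs_le)
    then show ?thesis
      by (simp add: power_mult_distrib D_def sum_nonneg)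
  qed
  then have "(\<Sum>i<N. (q i - m)\<^sup>2) \<le> real N * (real N ^ 2 * D)"
    using sum_bounded_above[of "{..<N}" _ "real N ^ 2 * D"] by simp
  then show ?thesis
    by (simp add: D_def power3_eq_cube power2_eq_square mult.assoc)
qed simp

definition shannon_entropy :: "nat \<Rightarrow> (nat \<Rightarrow> real) \<Rightarrow> real" where
  "shannon_entropy N p = - (\<Sum>i<N. p i * ln (p i))"

locale path_heat_flow =
  fixes N :: nat and sigma2 :: real and q :: "nat \<Rightarrow> real \<Rightarrow> real"
  assumes sigma2_pos: "sigma2 > 0"
    and has_real_derivative_q: "\<And>i t. i < N \<Longrightarrow> t \<ge> 0 \<Longrightarrow>
      (q i has_real_derivative sigma2 * path_laplacian N (\<lambda>k. q k t) i) (at t within {0..})"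
begin

lemma has_real_derivative_sum_comp:
  assumes "t \<ge> 0" and g: "\<And>i. i < N \<Longrightarrow> (g has_real_derivative g' (q i t)) (at (q i t))"
  shows "((\<lambda>s. \<Sum>i<N. g (q i s)) has_real_derivative
      sigma2 * (\<Sum>i<N. g' (q i t) * path_laplacian N (\<lambda>k. q k t) i)) (at t within {0..})"
proof -
  have "((\<lambda>s. \<Sum>i<N. g (q i s)) has_real_derivative
      (\<Sum>i<N. g' (q i t) * (sigma2 * path_laplacian N (\<lambda>k. q k t) i))) (at t within {0..})"
    by (intro DERIV_sum DERIV_chain2[OF g has_real_derivative_q]) (use \<open>t \<ge> 0\<close> in auto)
  then show ?thesis
    by (simp add: sum_distrib_left mult_ac)
qed

lemma sum_comp_nonincreasing:
  assumes g: "\<And>x. x \<in> S \<Longrightarrow> (g has_real_derivative g' x) (at x)" and "mono_on S g'"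
    and q_in: "\<And>i t. i < N \<Longrightarrow> t \<ge> 0 \<Longrightarrow> q i t \<in> S" and "0 \<le> s" "s \<le> t"
  shows "(\<Sum>i<N. g (q i t)) \<le> (\<Sum>i<N. g (q i s))"
proof (rule DERIV_within_nonpos_imp_nonincreasing[OF has_real_derivative_sum_comp])
  fix u :: real assume "0 \<le> u"
  then have "(\<Sum>i<N. g' (q i u) * path_laplacian N (\<lambda>k. q k u) i) \<le> 0"
    using sum_mono_comp_mult_path_laplacian_nonpos[OF \<open>mono_on S g'\<close>, of N "\<lambda>k. q k u"] q_in
    by simp
  then show "sigma2 * (\<Sum>i<N. g' (q i u) * path_laplacian N (\<lambda>k. q k u) i) \<le> 0"
    using sigma2_pos by (simp add: mult_nonneg_nonpos)
qed (use g q_in assms in auto)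

lemma sum_q_eq_initial:
  assumes "t \<ge> 0"
  shows "(\<Sum>i<N. q i t) = (\<Sum>i<N. q i 0)"
proof -
  have "(\<Sum>i<N. q i t) \<le> (\<Sum>i<N. q i 0)"
    by (rule sum_comp_nonincreasing[where S = UNIV and g = "\<lambda>x. x" and g' = "\<lambda>_. 1"])
      (use assms in \<open>auto simp: mono_on_def\<close>)
  moreover have "(\<Sum>i<N. - q i t) \<le> (\<Sum>i<N. - q i 0)"
    by (rule sum_comp_nonincreasing[where S = UNIV and g = uminus and g' = "\<lambda>_. - 1"])
      (use assms in \<open>auto simp: mono_on_def intro!: derivative_eq_intros\<close>)
  ultimately show ?thesis
    by (simp add: sum_negf)
qed

lemma q_nonneg:
  assumes "\<And>i. i < N \<Longrightarrow> q i 0 \<ge> 0" and "t \<ge> 0" "i < N"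
  shows "q i t \<ge> 0"
proof -
  have "(\<Sum>i<N. (min (q i t) 0)\<^sup>2) \<le> (\<Sum>i<N. (min (q i 0) 0)\<^sup>2)"
    by (rule sum_comp_nonincreasing[where S = UNIV, OF has_real_derivative_min_0_power2])
      (use \<open>t \<ge> 0\<close> in \<open>auto simp: mono_on_def\<close>)
  also have "\<dots> = 0"
    using assms(1) by (intro sum.neutral) auto
  finally have "(min (q i t) 0)\<^sup>2 = 0"
    using sum_nonneg_eq_0_iff[of "{..<N}" "\<lambda>i. (min (q i t) 0)\<^sup>2"] \<open>i < N\<close>
    by (simp add: order_antisym sum_nonneg)
  then show ?thesis
    by (simp add: min_def split: if_splits)
qed

lemma shannon_entropy_nondecreasing:
  assumes nonneg0: "\<And>i. i < N \<Longrightarrow> q i 0 \<ge> 0" and "0 \<le> s" "s \<le> t"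
  shows "shannon_entropy N (\<lambda>i. q i s) \<le> shannon_entropy N (\<lambda>i. q i t)"
proof -
  have nonneg: "q i u \<ge> 0" if "i < N" "u \<ge> 0" for i u
    using q_nonneg[OF nonneg0 that(2,1)] .
  \<comment> \<open>x ln x is not differentiable at 0, so compare the shifted sums first and let the shift vanish\<close>
  have shifted: "(\<Sum>i<N. (q i t + e) * ln (q i t + e)) \<le> (\<Sum>i<N. (q i s + e) * ln (q i s + e))"
    if "e > 0" for e :: real
  proof (rule sum_comp_nonincreasing[where S = "{0..}" and g' = "\<lambda>x. ln (x + e) + 1"])
    show "((\<lambda>x. (x + e) * ln (x + e)) has_real_derivative ln (x + e) + 1) (at x)"
      if "x \<in> {0..}" for x
      using that \<open>e > 0\<close> by (auto intro!: derivative_eq_intros)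
    show "mono_on {0..} (\<lambda>x. ln (x + e) + 1)"
      using \<open>e > 0\<close> by (auto intro!: mono_onI)
  qed (use nonneg assms in auto)
  have limit: "((\<lambda>e. \<Sum>i<N. (q i u + e) * ln (q i u + e)) \<longlongrightarrow> - shannon_entropy N (\<lambda>i. q i u))
      (at_right 0)" if "u \<ge> 0" for u
    unfolding shannon_entropy_def using nonneg that
    by (auto intro!: tendsto_sum tendsto_shift_mult_ln)
  have "- shannon_entropy N (\<lambda>i. q i t) \<le> - shannon_entropy N (\<lambda>i. q i s)"
  proof (rule tendsto_le[OF trivial_limit_at_right_real limit limit])
    show "\<forall>\<^sub>F e in at_right 0.
        (\<Sum>i<N. (q i t + e) * ln (q i t + e)) \<le> (\<Sum>i<N. (q i s + e) * ln (q i s + e))"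
      using eventually_at_right_less[of 0] by (rule eventually_mono) (rule shifted)
  qed (use assms in auto)
  then show ?thesis
    by simp
qed

lemma sum_sq_dev_exp_decay:
  defines "m \<equiv> (\<Sum>j<N. q j 0) / N"
  assumes "N > 0" "t \<ge> 0"
  shows "(\<Sum>i<N. (q i t - m)\<^sup>2) \<le> (\<Sum>i<N. (q i 0 - m)\<^sup>2) * exp (- (2 * sigma2 / N ^ 3) * t)"
proof -
  define c where "c = 2 * sigma2 / N ^ 3"
  define V where "V u = (\<Sum>i<N. (q i u - m)\<^sup>2)" for u
  define D where "D u = (\<Sum>k<N - 1. (q (k + 1) u - q k u)\<^sup>2)" for u
  have dV: "(V has_real_derivative - 2 * sigma2 * D u) (at u within {0..})" if "u \<ge> 0" for u
  proof -
    have "(V has_real_derivative sigma2 * (\<Sum>i<N. 2 * (q i u - m) * path_laplacian N (\<lambda>k. q k u) i))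
        (at u within {0..})"
      unfolding V_def by (rule has_real_derivative_sum_comp[OF that]) (auto intro!: derivative_eq_intros)
    also have "(\<Sum>i<N. 2 * (q i u - m) * path_laplacian N (\<lambda>k. q k u) i) = - 2 * D u"
      unfolding sum_mult_path_laplacian D_def sum_distrib_left sum_negf[symmetric]
      by (intro sum.cong) (auto simp: power2_eq_square algebra_simps)
    finally show ?thesis
      by (simp add: algebra_simps)
  qed
  \<comment> \<open>mass conservation makes m the mean at every time, so the Poincare inequality applies\<close>
  have V_le: "V u \<le> N ^ 3 * D u" if "u \<ge> 0" for u
    using path_poincare[of "\<lambda>i. q i u" N] sum_q_eq_initial[OF that] by (simp add: V_def D_def m_def)
  have dG: "((\<lambda>u. exp (c * u) * V u) has_real_derivative exp (c * u) * (c * V u - 2 * sigma2 * D u))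
      (at u within {0..})" if "u \<ge> 0" for u
  proof -
    have "((\<lambda>u. exp (c * u)) has_real_derivative exp (c * u) * c) (at u within {0..})"
      by (auto intro!: derivative_eq_intros)
    from DERIV_mult[OF this dV[OF that]] show ?thesis
      by (simp add: algebra_simps)
  qed
  have "exp (c * u) * (c * V u - 2 * sigma2 * D u) \<le> 0" if "u \<ge> 0" for u
  proof -
    have "c * V u \<le> c * (N ^ 3 * D u)"
      using V_le[OF that] sigma2_pos by (intro mult_left_mono) (auto simp: c_def)
    also have "\<dots> = 2 * sigma2 * D u"
      using \<open>N > 0\<close> by (simp add: c_def)
    finally show ?thesis
      by (simp add: mult_nonneg_nonpos)
  qed
  then have "exp (c * t) * V t \<le> exp (c * 0) * V 0"
    using DERIV_within_nonpos_imp_nonincreasing[OF dG, of 0 t] \<open>t \<ge> 0\<close> by blast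
  then have "exp (- c * t) * (exp (c * t) * V t) \<le> exp (- c * t) * V 0"
    by (intro mult_left_mono) auto
  then show ?thesis
    by (simp add: V_def c_def mult.assoc[symmetric] flip: exp_add) (simp add: mult.commute)
qed

lemma q_tendsto_mean:
  assumes "i < N"
  shows "((\<lambda>t. q i t) \<longlongrightarrow> (\<Sum>j<N. q j 0) / N) at_top"
proof -
  define m where "m = (\<Sum>j<N. q j 0) / N"
  define V0 where "V0 = (\<Sum>j<N. (q j 0 - m)\<^sup>2)"
  define c where "c = 2 * sigma2 / N ^ 3"
  have "c > 0"
    using sigma2_pos assms by (simp add: c_def)
  have "((\<lambda>t. (q i t - m)\<^sup>2) \<longlongrightarrow> 0) at_top"
  proof (rule tendsto_sandwich[of "\<lambda>_. 0" _ _ "\<lambda>t. V0 * exp (- c * t)"])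
    show "\<forall>\<^sub>F t in at_top. (q i t - m)\<^sup>2 \<le> V0 * exp (- c * t)"
    proof (rule eventually_mono[OF eventually_ge_at_top[of 0]])
      fix t :: real assume "t \<ge> 0"
      have "(q i t - m)\<^sup>2 \<le> (\<Sum>j<N. (q j t - m)\<^sup>2)"
        using member_le_sum[of i "{..<N}" "\<lambda>j. (q j t - m)\<^sup>2"] assms by simp
      also have "\<dots> \<le> V0 * exp (- c * t)"
        using sum_sq_dev_exp_decay[OF _ \<open>t \<ge> 0\<close>] assms by (simp add: m_def V0_def c_def)
      finally show "(q i t - m)\<^sup>2 \<le> V0 * exp (- c * t)" .
    qed
    have "((\<lambda>t. exp (- c * t)) \<longlongrightarrow> 0) at_top"
      using \<open>c > 0\<close> by real_asymp
    then show "((\<lambda>t. V0 * exp (- c * t)) \<longlongrightarrow> 0) at_top"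
      by (rule tendsto_mult_right_zero)
  qed simp_all
  from tendsto_real_sqrt[OF this] have "((\<lambda>t. \<bar>q i t - m\<bar>) \<longlongrightarrow> 0) at_top"
    by simp
  then show ?thesis
    unfolding m_def by (simp add: tendsto_rabs_zero_iff LIM_zero_iff)
qed

lemma shannon_entropy_tendsto_ln:
  assumes "N \<ge> 1" "(\<Sum>i<N. q i 0) = 1"
  shows "((\<lambda>t. shannon_entropy N (\<lambda>i. q i t)) \<longlongrightarrow> ln N) at_top"
proof -
  have "((\<lambda>t. q i t * ln (q i t)) \<longlongrightarrow> 1 / N * ln (1 / N)) at_top" if "i < N" for i
  proof -
    have "((\<lambda>t. q i t) \<longlongrightarrow> 1 / N) at_top"
      using q_tendsto_mean[OF that] assms(2) by simp
    then show ?thesis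
      using assms(1) by (intro tendsto_mult tendsto_ln) auto
  qed
  then have "((\<lambda>t. - (\<Sum>i<N. q i t * ln (q i t))) \<longlongrightarrow> - (\<Sum>i<N. 1 / N * ln (1 / N))) at_top"
    by (intro tendsto_minus tendsto_sum) auto
  then show ?thesis
    using assms(1) by (simp add: shannon_entropy_def ln_div)
qed

end

section \<open>The generator on matrix entries\<close>

lemma index_A_u_mult:
  assumes "\<rho> \<in> carrier_mat N n" "i < N" "j < n"
  shows "(A_u N * \<rho>) $$ (i, j) = (if 1 \<le> i then \<rho> $$ (i - 1, j) else 0)"
proof -
  have "(A_u N * \<rho>) $$ (i, j) = (\<Sum>l<N. (if l = i - 1 \<and> 1 \<le> i then 1 else 0) * \<rho> $$ (l, j))"
    using assms by (auto simp: A_u_def scalar_prod_def atLeast0LessThan intro!: sum.cong)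
  then show ?thesis
    using assms by (auto simp: if_distrib[of "\<lambda>x. x * _"] sum.delta cong: if_cong)
qed

lemma index_A_d_mult:
  assumes "\<rho> \<in> carrier_mat N n" "i < N" "j < n"
  shows "(A_d N * \<rho>) $$ (i, j) = (if i + 1 < N then \<rho> $$ (i + 1, j) else 0)"
proof -
  have "(A_d N * \<rho>) $$ (i, j) = (\<Sum>l<N. (if l = i + 1 then 1 else 0) * \<rho> $$ (l, j))"
    using assms by (auto simp: A_d_def scalar_prod_def atLeast0LessThan intro!: sum.cong)
  then show ?thesis
    using assms by (auto simp: if_distrib[of "\<lambda>x. x * _"] sum.delta cong: if_cong)
qed

lemma index_mult_A_u:
  assumes "\<rho> \<in> carrier_mat n N" "i < n" "j < N"
  shows "(\<rho> * A_u N) $$ (i, j) = (if j + 1 < N then \<rho> $$ (i, j + 1) else 0)"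
proof -
  have "(\<rho> * A_u N) $$ (i, j) = (\<Sum>l<N. \<rho> $$ (i, l) * (if l = j + 1 then 1 else 0))"
    using assms by (auto simp: A_u_def scalar_prod_def atLeast0LessThan intro!: sum.cong)
  then show ?thesis
    using assms by (auto simp: if_distrib[of "\<lambda>x. _ * x"] sum.delta cong: if_cong)
qed

lemma index_mult_A_d:
  assumes "\<rho> \<in> carrier_mat n N" "i < n" "j < N"
  shows "(\<rho> * A_d N) $$ (i, j) = (if 1 \<le> j then \<rho> $$ (i, j - 1) else 0)"
proof -
  have "(\<rho> * A_d N) $$ (i, j) = (\<Sum>l<N. \<rho> $$ (i, l) * (if l = j - 1 \<and> 1 \<le> j then 1 else 0))"
    using assms by (auto simp: A_d_def scalar_prod_def atLeast0LessThan intro!: sum.cong)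
  then show ?thesis
    using assms by (auto simp: if_distrib[of "\<lambda>x. _ * x"] sum.delta cong: if_cong)
qed

lemma A_u_carrier [simp]: "A_u N \<in> carrier_mat N N"
  and A_d_carrier [simp]: "A_d N \<in> carrier_mat N N"
  by (simp_all add: A_u_def A_d_def)

lemma dim_A_u [simp]: "dim_row (A_u N) = N" "dim_col (A_u N) = N"
  and dim_A_d [simp]: "dim_row (A_d N) = N" "dim_col (A_d N) = N"
  by (simp_all add: A_u_def A_d_def)

definition path_degree :: "nat \<Rightarrow> nat \<Rightarrow> real" where
  "path_degree N i = (if 1 \<le> i then 1 else 0) + (if i + 1 < N then 1 else 0)"

lemma A_u_A_d_anticommutator:
  "A_u N * A_d N + A_d N * A_u N = mat_diag N (\<lambda>i. complex_of_real (path_degree N i))"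
proof (rule eq_matI)
  fix i j assume "i < dim_row (mat_diag N (\<lambda>i. complex_of_real (path_degree N i)))"
    "j < dim_col (mat_diag N (\<lambda>i. complex_of_real (path_degree N i)))"
  then have ij: "i < N" "j < N"
    by (simp_all add: mat_diag_def)
  have "(A_u N * A_d N) $$ (i, j) = (if 1 \<le> i then A_d N $$ (i - 1, j) else 0)"
    and "(A_d N * A_u N) $$ (i, j) = (if i + 1 < N then A_u N $$ (i + 1, j) else 0)"
    using index_A_u_mult[OF A_d_carrier ij] index_A_d_mult[OF A_u_carrier ij] .
  with ij show "(A_u N * A_d N + A_d N * A_u N) $$ (i, j)
      = mat_diag N (\<lambda>i. complex_of_real (path_degree N i)) $$ (i, j)"
    by (auto simp: A_u_def A_d_def path_degree_def mat_diag_def)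
qed (simp_all add: mat_diag_def)

definition mat_path_laplacian :: "nat \<Rightarrow> (nat \<Rightarrow> nat \<Rightarrow> 'a::real_vector) \<Rightarrow> nat \<Rightarrow> nat \<Rightarrow> 'a" where
  "mat_path_laplacian N X i j =
     (if 1 \<le> i \<and> 1 \<le> j then X (i - 1) (j - 1) else 0)
     + (if i + 1 < N \<and> j + 1 < N then X (i + 1) (j + 1) else 0)
     - ((path_degree N i + path_degree N j) / 2) *\<^sub>R X i j"

lemma index_mkt_generator:
  assumes \<rho>: "\<rho> \<in> carrier_mat N N" and ij: "i < N" "j < N"
  shows "mkt_generator sigma2 N \<rho> $$ (i, j)
    = complex_of_real sigma2 * mat_path_laplacian N (\<lambda>i j. \<rho> $$ (i, j)) i j"
proof -
  have "(A_u N * \<rho> * A_d N) $$ (i, j) = (if 1 \<le> j then (A_u N * \<rho>) $$ (i, j - 1) else 0)"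
    by (rule index_mult_A_d[OF mult_carrier_mat[OF A_u_carrier \<rho>] ij])
  also have "\<dots> = (if 1 \<le> i \<and> 1 \<le> j then \<rho> $$ (i - 1, j - 1) else 0)"
    using index_A_u_mult[OF \<rho>, of i "j - 1"] ij by auto
  finally have up_down: "(A_u N * \<rho> * A_d N) $$ (i, j) = \<dots>" .
  have "(A_d N * \<rho> * A_u N) $$ (i, j) = (if j + 1 < N then (A_d N * \<rho>) $$ (i, j + 1) else 0)"
    by (rule index_mult_A_u[OF mult_carrier_mat[OF A_d_carrier \<rho>] ij])
  also have "\<dots> = (if i + 1 < N \<and> j + 1 < N then \<rho> $$ (i + 1, j + 1) else 0)"
    using index_A_d_mult[OF \<rho>, of i "j + 1"] ij by auto
  finally have down_up: "(A_d N * \<rho> * A_u N) $$ (i, j) = \<dots>" .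
  show ?thesis
    using \<rho> ij unfolding mkt_generator_def A_u_A_d_anticommutator mat_path_laplacian_def
    by (simp add: up_down down_up mat_diag_mult_left[OF \<rho>] mat_diag_mult_right[OF \<rho>]
        scaleR_conv_of_real field_simps)
qed

lemma Re_mat_path_laplacian:
  "Re (mat_path_laplacian N X i j) = mat_path_laplacian N (\<lambda>i j. Re (X i j)) i j"
  and Im_mat_path_laplacian:
  "Im (mat_path_laplacian N X i j) = mat_path_laplacian N (\<lambda>i j. Im (X i j)) i j"
  by (simp_all add: mat_path_laplacian_def)

lemma mat_path_laplacian_diag:
  "mat_path_laplacian N X i i = path_laplacian N (\<lambda>k. X k k) i"
  for X :: "nat \<Rightarrow> nat \<Rightarrow> real"
  by (simp add: mat_path_laplacian_def path_laplacian_def path_degree_def algebra_simps)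

lemma mat_path_laplacian_off_diag:
  "mat_path_laplacian N (\<lambda>i j. if i = j then 0 else X i j) i j
    = (if i = j then 0 else mat_path_laplacian N X i j)"
  by (auto simp: mat_path_laplacian_def)

lemma sum_diag_shift:
  fixes f :: "nat \<Rightarrow> nat \<Rightarrow> 'a::comm_monoid_add"
  shows "(\<Sum>i<N. \<Sum>j<N. if 1 \<le> i \<and> 1 \<le> j then f i j else 0)
       = (\<Sum>i<N. \<Sum>j<N. if i + 1 < N \<and> j + 1 < N then f (i + 1) (j + 1) else 0)"
proof (cases N)
  case (Suc n)
  have "(\<Sum>i<Suc n. \<Sum>j<Suc n. if 1 \<le> i \<and> 1 \<le> j then f i j else 0)
      = (\<Sum>i<n. \<Sum>j<n. f (i + 1) (j + 1))"
    unfolding sum.lessThan_Suc_shift by simp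
  also have "\<dots> = (\<Sum>i<Suc n. \<Sum>j<Suc n. if i < n \<and> j < n then f (i + 1) (j + 1) else 0)"
    by (simp add: sum.lessThan_Suc)
  finally show ?thesis
    unfolding Suc by simp
qed simp

lemma sum_mult_mat_path_laplacian:
  fixes X :: "nat \<Rightarrow> nat \<Rightarrow> real"
  shows "(\<Sum>i<N. \<Sum>j<N. X i j * mat_path_laplacian N X i j)
    = 2 * (\<Sum>i<N. \<Sum>j<N. if i + 1 < N \<and> j + 1 < N then X i j * X (i + 1) (j + 1) else 0)
      - (\<Sum>i<N. \<Sum>j<N. (path_degree N i + path_degree N j) / 2 * (X i j)\<^sup>2)"
proof -
  define a where "a i j \<longleftrightarrow> 1 \<le> i \<and> 1 \<le> j" for i j :: nat
  define b where "b i j \<longleftrightarrow> i + 1 < N \<and> j + 1 < N" for i j :: nat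
  define c where "c i j = (path_degree N i + path_degree N j) / 2" for i j
  have "X i j * mat_path_laplacian N X i j
      = (if a i j then X (i - 1) (j - 1) * X i j else 0)
        + (if b i j then X i j * X (i + 1) (j + 1) else 0) - c i j * (X i j)\<^sup>2" for i j
    by (simp add: mat_path_laplacian_def a_def b_def c_def algebra_simps power2_eq_square)
  then have "(\<Sum>i<N. \<Sum>j<N. X i j * mat_path_laplacian N X i j)
      = (\<Sum>i<N. \<Sum>j<N. if a i j then X (i - 1) (j - 1) * X i j else 0)
        + (\<Sum>i<N. \<Sum>j<N. if b i j then X i j * X (i + 1) (j + 1) else 0)
        - (\<Sum>i<N. \<Sum>j<N. c i j * (X i j)\<^sup>2)"
    by (simp add: sum.distrib sum_subtractf)
  also have "(\<Sum>i<N. \<Sum>j<N. if a i j then X (i - 1) (j - 1) * X i j else 0)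
      = (\<Sum>i<N. \<Sum>j<N. if b i j then X i j * X (i + 1) (j + 1) else 0)"
    unfolding a_def b_def sum_diag_shift by (simp cong: if_cong)
  finally show ?thesis
    by (simp add: b_def c_def)
qed

lemma sum_mult_mat_path_laplacian_nonpos:
  fixes X :: "nat \<Rightarrow> nat \<Rightarrow> real"
  shows "(\<Sum>i<N. \<Sum>j<N. X i j * mat_path_laplacian N X i j) \<le> 0"
proof -
  define a where "a i j \<longleftrightarrow> 1 \<le> i \<and> 1 \<le> j" for i j :: nat
  define b where "b i j \<longleftrightarrow> i + 1 < N \<and> j + 1 < N" for i j :: nat
  define c where "c i j = (path_degree N i + path_degree N j) / 2" for i j
  \<comment> \<open>AM-GM bounds the cross term of each edge (i, j) -- (i + 1, j + 1) by the squares at its ends,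
    and the degrees dominate the number of such edges at (i, j).\<close>
  have "(\<Sum>i<N. \<Sum>j<N. X i j * mat_path_laplacian N X i j)
      \<le> (\<Sum>i<N. \<Sum>j<N. if b i j then (X i j)\<^sup>2 + (X (i + 1) (j + 1))\<^sup>2 else 0)
        - (\<Sum>i<N. \<Sum>j<N. c i j * (X i j)\<^sup>2)"
    unfolding sum_mult_mat_path_laplacian sum_distrib_left b_def c_def
    using sum_squares_bound[of "X _ _" "X _ _"] by (intro diff_right_mono sum_mono) (auto simp: mult.assoc)
  also have "(\<Sum>i<N. \<Sum>j<N. if b i j then (X i j)\<^sup>2 + (X (i + 1) (j + 1))\<^sup>2 else 0)
      = (\<Sum>i<N. \<Sum>j<N. (if a i j then (X i j)\<^sup>2 else 0) + (if b i j then (X i j)\<^sup>2 else 0))"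
  proof -
    have "(if P then u + v else 0) = (if P then u else 0) + (if P then v else (0::real))" for P u v
      by simp
    then show ?thesis
      using sum_diag_shift[of "\<lambda>i j. (X i j)\<^sup>2" N] by (simp add: a_def b_def sum.distrib add_ac)
  qed
  also have "\<dots> - (\<Sum>i<N. \<Sum>j<N. c i j * (X i j)\<^sup>2)
      = (\<Sum>i<N. \<Sum>j<N. (if a i j then (X i j)\<^sup>2 else 0) + (if b i j then (X i j)\<^sup>2 else 0)
          - c i j * (X i j)\<^sup>2)"
    by (simp add: sum_subtractf)
  also have "\<dots> \<le> 0"
  proof (intro sum_nonpos)
    fix i j
    have "(if a i j then 1 else 0) + (if b i j then 1 else 0) \<le> c i j"
      by (auto simp: a_def b_def c_def path_degree_def)
    then have "((if a i j then 1 else 0) + (if b i j then 1 else 0) - c i j) * (X i j)\<^sup>2 \<le> 0"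
      by (simp add: mult_nonpos_nonneg)
    then show "(if a i j then (X i j)\<^sup>2 else 0) + (if b i j then (X i j)\<^sup>2 else 0) - c i j * (X i j)\<^sup>2 \<le> 0"
      by (cases "a i j"; cases "b i j") (simp_all add: algebra_simps)
  qed
  finally show ?thesis .
qed

lemma mat_path_laplacian_flow_eq_0:
  fixes Y :: "nat \<Rightarrow> nat \<Rightarrow> real \<Rightarrow> real"
  assumes "sigma2 \<ge> 0"
    and deriv: "\<And>i j t. i < N \<Longrightarrow> j < N \<Longrightarrow> t \<ge> 0 \<Longrightarrow>
      (Y i j has_real_derivative sigma2 * mat_path_laplacian N (\<lambda>i j. Y i j t) i j) (at t within {0..})"
    and init: "\<And>i j. i < N \<Longrightarrow> j < N \<Longrightarrow> Y i j 0 = 0"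
    and "t \<ge> 0" "i < N" "j < N"
  shows "Y i j t = 0"
proof -
  define E where "E s = (\<Sum>i<N. \<Sum>j<N. (Y i j s)\<^sup>2)" for s
  have "(E has_real_derivative 2 * sigma2 * (\<Sum>i<N. \<Sum>j<N. Y i j s * mat_path_laplacian N (\<lambda>i j. Y i j s) i j))
      (at s within {0..})" if "s \<ge> 0" for s
  proof -
    have "(E has_real_derivative (\<Sum>i<N. \<Sum>j<N. 2 * Y i j s * (sigma2 * mat_path_laplacian N (\<lambda>i j. Y i j s) i j)))
        (at s within {0..})"
      unfolding E_def using that by (intro DERIV_sum) (auto intro!: derivative_eq_intros deriv)
    then show ?thesis
      by (simp add: sum_distrib_left mult_ac)
  qed
  then have "E t \<le> E 0"
    using sum_mult_mat_path_laplacian_nonpos \<open>sigma2 \<ge> 0\<close> \<open>t \<ge> 0\<close>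
    by (intro DERIV_within_nonpos_imp_nonincreasing[of 0 E]) (auto simp: mult_nonneg_nonpos)
  also have "E 0 = 0"
    using init by (simp add: E_def)
  finally have "(\<Sum>i<N. \<Sum>j<N. (Y i j t)\<^sup>2) = 0"
    using E_def by (simp add: order_antisym sum_nonneg)
  then show ?thesis
    using \<open>i < N\<close> \<open>j < N\<close> by (simp add: sum_nonneg_eq_0_iff sum_nonneg)
qed

section \<open>Entropy of diagonal density matrices\<close>

lemma mat_adjoint_carrier: "U \<in> carrier_mat n m \<Longrightarrow> mat_adjoint U \<in> carrier_mat m n"
  unfolding mat_adjoint_def by auto

lemma index_mat_adjoint:
  "U \<in> carrier_mat n m \<Longrightarrow> i < m \<Longrightarrow> j < n \<Longrightarrow> mat_adjoint U $$ (i, j) = cnj (U $$ (j, i))"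
  unfolding mat_adjoint_def by (auto simp: mat_of_rows_def)

lemma mat_adjoint_one [simp]: "mat_adjoint (1\<^sub>m N) = (1\<^sub>m N :: complex mat)"
  by (rule eq_matI) (auto simp: index_mat_adjoint[of _ N N] mat_adjoint_carrier[of _ N N, THEN carrier_matD(1)]
      mat_adjoint_carrier[of _ N N, THEN carrier_matD(2)])

lemma unitary_mat_one: "unitary_mat N (1\<^sub>m N)"
  unfolding unitary_mat_def by simp

lemma unitary_mat_sum_col:
  assumes "unitary_mat N U" "k < N"
  shows "(\<Sum>i<N. U $$ (i, k) * cnj (U $$ (i, k))) = 1"
proof -
  have U: "U \<in> carrier_mat N N" and "mat_adjoint U * U = 1\<^sub>m N"
    using assms unfolding unitary_mat_def by auto
  then have "(mat_adjoint U * U) $$ (k, k) = 1"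
    using assms by simp
  then show ?thesis
    using U mat_adjoint_carrier[OF U] assms
    by (simp add: scalar_prod_def atLeast0LessThan index_mat_adjoint[OF U] mult.commute)
qed

lemma unitary_mat_sum_row:
  assumes "unitary_mat N U" "k < N"
  shows "(\<Sum>j<N. U $$ (k, j) * cnj (U $$ (k, j))) = 1"
proof -
  have U: "U \<in> carrier_mat N N" and "U * mat_adjoint U = 1\<^sub>m N"
    using assms unfolding unitary_mat_def by auto
  then have "(U * mat_adjoint U) $$ (k, k) = 1"
    using assms by simp
  then show ?thesis
    using U mat_adjoint_carrier[OF U] assms
    by (simp add: scalar_prod_def atLeast0LessThan index_mat_adjoint[OF U])
qed

lemma mat_trace_unitary_conj_diag:
  assumes "unitary_mat N U"
  shows "mat_trace (U * mat_diag N g * mat_adjoint U) = (\<Sum>k<N. g k)"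
proof -
  have U: "U \<in> carrier_mat N N"
    using assms unfolding unitary_mat_def by auto
  have "(U * mat_diag N g * mat_adjoint U) $$ (i, i) = (\<Sum>k<N. U $$ (i, k) * cnj (U $$ (i, k)) * g k)"
    if "i < N" for i
    using that U mat_adjoint_carrier[OF U]
    by (simp add: mat_diag_mult_right[OF U] scalar_prod_def atLeast0LessThan index_mat_adjoint[OF U]
        mult_ac)
  then have "mat_trace (U * mat_diag N g * mat_adjoint U)
      = (\<Sum>i<N. \<Sum>k<N. U $$ (i, k) * cnj (U $$ (i, k)) * g k)"
    using U by (simp add: mat_trace_def)
  also have "\<dots> = (\<Sum>k<N. (\<Sum>i<N. U $$ (i, k) * cnj (U $$ (i, k))) * g k)"
    by (subst sum.swap) (simp add: sum_distrib_right)
  finally show ?thesis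
    using unitary_mat_sum_col[OF assms] by simp
qed

text \<open>A unitary change of basis only mixes basis vectors belonging to the same eigenvalue, so
  averaging with the doubly stochastic weights U_ik cnj(U_ik) turns a sum over the eigenvalues lam
  into the sum over the diagonal entries q.\<close>
lemma sum_eigenvalues_unitary_diag:
  fixes q lam :: "nat \<Rightarrow> real" and f :: "real \<Rightarrow> real"
  assumes "unitary_mat N U"
    and diag: "mat_diag N (\<lambda>i. complex_of_real (q i))
      = U * mat_diag N (\<lambda>k. complex_of_real (lam k)) * mat_adjoint U"
  shows "(\<Sum>k<N. f (lam k)) = (\<Sum>i<N. f (q i))"
proof -
  have U: "U \<in> carrier_mat N N" and UU: "mat_adjoint U * U = 1\<^sub>m N"
    using assms unfolding unitary_mat_def by auto
  define w where "w i k = U $$ (i, k) * cnj (U $$ (i, k))" for i k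
  have "mat_diag N (\<lambda>i. complex_of_real (q i)) * U
      = U * mat_diag N (\<lambda>k. complex_of_real (lam k)) * (mat_adjoint U * U)"
    unfolding diag using U mat_adjoint_carrier[OF U]
    by (intro assoc_mult_mat[of _ N N _ N _ N]) auto
  also have "\<dots> = U * mat_diag N (\<lambda>k. complex_of_real (lam k))"
    using U by (metis UU mat_diag_dim mult_carrier_mat right_mult_one_mat)
  finally have eigen: "mat_diag N (\<lambda>i. complex_of_real (q i)) * U
      = U * mat_diag N (\<lambda>k. complex_of_real (lam k))" .
  have "w i k * complex_of_real (f (lam k)) = w i k * complex_of_real (f (q i))" if "i < N" "k < N" for i k
  proof (cases "U $$ (i, k) = 0")
    case False
    have "complex_of_real (q i) * U $$ (i, k) = U $$ (i, k) * complex_of_real (lam k)"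
      using arg_cong[OF eigen, of "\<lambda>A. A $$ (i, k)"] that U
      by (simp add: mat_diag_mult_left[OF U] mat_diag_mult_right[OF U])
    with False show ?thesis
      by (simp add: mult.commute)
  qed (simp add: w_def)
  then have "(\<Sum>k<N. (\<Sum>i<N. w i k) * complex_of_real (f (lam k)))
      = (\<Sum>k<N. \<Sum>i<N. w i k * complex_of_real (f (q i)))"
    by (auto simp: sum_distrib_right intro!: sum.cong)
  also have "\<dots> = (\<Sum>i<N. (\<Sum>k<N. w i k) * complex_of_real (f (q i)))"
    by (subst sum.swap) (simp add: sum_distrib_right)
  finally have "complex_of_real (\<Sum>k<N. f (lam k)) = complex_of_real (\<Sum>i<N. f (q i))"
    using unitary_mat_sum_col[OF assms(1)] unitary_mat_sum_row[OF assms(1)] by (simp add: w_def)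
  then show ?thesis
    by (simp only: of_real_eq_iff)
qed

lemma mat_trace_herm_mat_fun_diag:
  fixes q :: "nat \<Rightarrow> real"
  shows "mat_trace (herm_mat_fun f (mat_diag N (\<lambda>i. complex_of_real (q i))))
    = complex_of_real (\<Sum>i<N. f (q i))"
proof -
  define A where "A = mat_diag N (\<lambda>i. complex_of_real (q i))"
  have dim: "dim_row A = N"
    by (simp add: A_def mat_diag_def)
  have "A = 1\<^sub>m N * mat_diag N (\<lambda>i. complex_of_real (q i)) * mat_adjoint (1\<^sub>m N)"
    unfolding A_def by (metis left_mult_one_mat right_mult_one_mat mat_diag_dim mat_adjoint_one)
  then have ex: "\<exists>B U (lam :: nat \<Rightarrow> real). unitary_mat (dim_row A) U
      \<and> A = U * mat_diag (dim_row A) (\<lambda>i. complex_of_real (lam i)) * mat_adjoint U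
      \<and> B = U * mat_diag (dim_row A) (\<lambda>i. complex_of_real (f (lam i))) * mat_adjoint U"
    unfolding dim using unitary_mat_one by blast
  then obtain U lam where U: "unitary_mat N U"
    and A: "A = U * mat_diag N (\<lambda>i. complex_of_real (lam i)) * mat_adjoint U"
    and fA: "herm_mat_fun f A = U * mat_diag N (\<lambda>i. complex_of_real (f (lam i))) * mat_adjoint U"
    using someI_ex[OF ex] unfolding herm_mat_fun_def dim by blast
  have "mat_trace (herm_mat_fun f A) = (\<Sum>k<N. complex_of_real (f (lam k)))"
    unfolding fA by (rule mat_trace_unitary_conj_diag[OF U])
  also have "\<dots> = complex_of_real (\<Sum>i<N. f (q i))"
    by (simp only: of_real_sum[symmetric] sum_eigenvalues_unitary_diag[OF U A[unfolded A_def]])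
  finally show ?thesis
    unfolding A_def .
qed

lemma von_neumann_entropy_diag:
  fixes q :: "nat \<Rightarrow> real"
  shows "von_neumann_entropy (mat_diag N (\<lambda>i. complex_of_real (q i))) = shannon_entropy N q"
  by (simp add: von_neumann_entropy_def mat_trace_herm_mat_fun_diag shannon_entropy_def sum_negf)

section \<open>The market master equation\<close>

locale mkt_master_equation =
  fixes N :: nat and sigma2 :: real and \<rho> :: "real \<Rightarrow> complex mat"
  assumes sigma2_pos: "sigma2 > 0"
    and carrier: "\<And>t. t \<ge> 0 \<Longrightarrow> \<rho> t \<in> carrier_mat N N"
    and evol: "\<And>t i j. t \<ge> 0 \<Longrightarrow> i < N \<Longrightarrow> j < N \<Longrightarrow>
      ((\<lambda>s. \<rho> s $$ (i, j)) has_vector_derivative (mkt_generator sigma2 N (\<rho> t) $$ (i, j)))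
        (at t within {0..})"
begin

lemma has_real_derivative_Re:
  assumes "i < N" "j < N" "t \<ge> 0"
  shows "((\<lambda>s. Re (\<rho> s $$ (i, j))) has_real_derivative
      sigma2 * mat_path_laplacian N (\<lambda>i j. Re (\<rho> t $$ (i, j))) i j) (at t within {0..})"
  using has_field_derivative_Re[OF evol[OF assms(3,1,2)]]
  by (simp add: index_mkt_generator[OF carrier[OF assms(3)] assms(1,2)] Re_mat_path_laplacian)

lemma has_real_derivative_Im:
  assumes "i < N" "j < N" "t \<ge> 0"
  shows "((\<lambda>s. Im (\<rho> s $$ (i, j))) has_real_derivative
      sigma2 * mat_path_laplacian N (\<lambda>i j. Im (\<rho> t $$ (i, j))) i j) (at t within {0..})"
  using has_field_derivative_Im[OF evol[OF assms(3,1,2)]]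
  by (simp add: index_mkt_generator[OF carrier[OF assms(3)] assms(1,2)] Im_mat_path_laplacian)

lemma diagonal_path_heat_flow: "path_heat_flow N sigma2 (\<lambda>i t. Re (\<rho> t $$ (i, i)))"
proof
  fix i :: nat and t :: real assume "i < N" "0 \<le> t"
  from has_real_derivative_Re[OF this(1,1,2)]
  show "((\<lambda>t. Re (\<rho> t $$ (i, i))) has_real_derivative
      sigma2 * path_laplacian N (\<lambda>k. Re (\<rho> t $$ (k, k))) i) (at t within {0..})"
    by (simp add: mat_path_laplacian_diag)
qed (rule sigma2_pos)

lemma stays_diagonal:
  assumes init: "\<rho> 0 = mat_diag N (\<lambda>i. complex_of_real (p i))" and "t \<ge> 0"
  shows "\<rho> t = mat_diag N (\<lambda>i. complex_of_real (Re (\<rho> t $$ (i, i))))"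
proof (rule eq_matI)
  fix i j assume "i < dim_row (mat_diag N (\<lambda>i. complex_of_real (Re (\<rho> t $$ (i, i)))))"
    "j < dim_col (mat_diag N (\<lambda>i. complex_of_real (Re (\<rho> t $$ (i, i)))))"
  then have ij: "i < N" "j < N"
    by (simp_all add: mat_diag_def)
  have init_entry: "\<rho> 0 $$ (i, j) = (if i = j then complex_of_real (p i) else 0)" if "i < N" "j < N" for i j
    using that by (simp add: init mat_diag_def)
  have "Im (\<rho> t $$ (i, j)) = 0"
  proof (rule mat_path_laplacian_flow_eq_0[where Y = "\<lambda>i j s. Im (\<rho> s $$ (i, j))"])
    show "\<And>i j s. i < N \<Longrightarrow> j < N \<Longrightarrow> 0 \<le> s \<Longrightarrow> ((\<lambda>s. Im (\<rho> s $$ (i, j))) has_real_derivative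
        sigma2 * mat_path_laplacian N (\<lambda>i j. Im (\<rho> s $$ (i, j))) i j) (at s within {0..})"
      by (rule has_real_derivative_Im)
  qed (use sigma2_pos init_entry ij \<open>t \<ge> 0\<close> in auto)
  moreover have "(if i = j then 0 else Re (\<rho> t $$ (i, j))) = 0"
  proof (rule mat_path_laplacian_flow_eq_0[where Y = "\<lambda>i j s. if i = j then 0 else Re (\<rho> s $$ (i, j))"])
    fix i j :: nat and s :: real assume "i < N" "j < N" "0 \<le> s"
    show "((\<lambda>s. if i = j then 0 else Re (\<rho> s $$ (i, j))) has_real_derivative
        sigma2 * mat_path_laplacian N (\<lambda>i j. if i = j then 0 else Re (\<rho> s $$ (i, j))) i j) (at s within {0..})"
      unfolding mat_path_laplacian_off_diag
      using has_real_derivative_Re[OF \<open>i < N\<close> \<open>j < N\<close> \<open>0 \<le> s\<close>] by (simp add: DERIV_const)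
  qed (use sigma2_pos init_entry ij \<open>t \<ge> 0\<close> in auto)
  ultimately show "\<rho> t $$ (i, j) = mat_diag N (\<lambda>i. complex_of_real (Re (\<rho> t $$ (i, i)))) $$ (i, j)"
    using ij by (simp add: mat_diag_def complex_eq_iff split: if_splits)
qed (use carrier[OF \<open>t \<ge> 0\<close>] in \<open>simp_all add: mat_diag_def\<close>)

sublocale diag: path_heat_flow N sigma2 "\<lambda>i t. Re (\<rho> t $$ (i, i))"
  by (rule diagonal_path_heat_flow)

lemma von_neumann_entropy_eq_shannon:
  assumes "\<rho> 0 = mat_diag N (\<lambda>i. complex_of_real (p i))" and "t \<ge> 0"
  shows "von_neumann_entropy (\<rho> t) = shannon_entropy N (\<lambda>i. Re (\<rho> t $$ (i, i)))"
proof -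
  have "von_neumann_entropy (\<rho> t)
      = von_neumann_entropy (mat_diag N (\<lambda>i. complex_of_real (Re (\<rho> t $$ (i, i)))))"
    using stays_diagonal[OF assms] by (rule arg_cong)
  also have "\<dots> = shannon_entropy N (\<lambda>i. Re (\<rho> t $$ (i, i)))"
    by (rule von_neumann_entropy_diag)
  finally show ?thesis .
qed

end

theorem mainTheorem3:
  fixes N :: nat and sigma2 :: real and p :: "nat \<Rightarrow> real" and \<rho> :: "real \<Rightarrow> complex mat"
  assumes N_pos: "N \<ge> 1"
    and sigma_pos: "sigma2 > 0"
    and p_nonneg: "\<And>i. i < N \<Longrightarrow> p i \<ge> 0"
    and p_sum: "(\<Sum>i<N. p i) = 1"
    and dim: "\<And>t. t \<ge> 0 \<Longrightarrow> \<rho> t \<in> carrier_mat N N"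
    and init: "\<rho> 0 = mat_diag N (\<lambda>i. complex_of_real (p i))"
    and evol: "\<And>t i j. t \<ge> 0 \<Longrightarrow> i < N \<Longrightarrow> j < N \<Longrightarrow>
      ((\<lambda>s. \<rho> s $$ (i, j)) has_vector_derivative (mkt_generator sigma2 N (\<rho> t) $$ (i, j)))
        (at t within {0..})"
  shows "mono_on {0..} (\<lambda>t. von_neumann_entropy (\<rho> t))
    \<and> ((\<lambda>t. von_neumann_entropy (\<rho> t)) \<longlongrightarrow> ln (real N)) at_top"
proof -
  interpret mkt_master_equation N sigma2 \<rho>
    using sigma_pos dim evol by unfold_locales
  note entropy = von_neumann_entropy_eq_shannon[OF init]
  have diag0: "Re (\<rho> 0 $$ (i, i)) = p i" if "i < N" for i
    using that by (simp add: init mat_diag_def)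
  then have diag0_nonneg: "Re (\<rho> 0 $$ (i, i)) \<ge> 0" if "i < N" for i
    using p_nonneg that by simp
  have "mono_on {0..} (\<lambda>t. von_neumann_entropy (\<rho> t))"
  proof (rule mono_onI)
    fix s t :: real assume "s \<in> {0..}" "t \<in> {0..}" "s \<le> t"
    then show "von_neumann_entropy (\<rho> s) \<le> von_neumann_entropy (\<rho> t)"
      using diag.shannon_entropy_nondecreasing[OF diag0_nonneg] by (simp add: entropy)
  qed
  moreover have "((\<lambda>t. von_neumann_entropy (\<rho> t)) \<longlongrightarrow> ln N) at_top"
  proof (rule Lim_transform_eventually)
    show "((\<lambda>t. shannon_entropy N (\<lambda>i. Re (\<rho> t $$ (i, i)))) \<longlongrightarrow> ln N) at_top"
      using diag.shannon_entropy_tendsto_ln[OF N_pos] diag0 p_sum by simp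
    show "\<forall>\<^sub>F t in at_top. shannon_entropy N (\<lambda>i. Re (\<rho> t $$ (i, i))) = von_neumann_entropy (\<rho> t)"
      using eventually_ge_at_top[of 0] by (rule eventually_mono) (simp add: entropy)
  qed
  ultimately show ?thesis
    by simp
qed

end
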